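(* Let $\Phi$ be an $N\times\mathcal{C}$ complex matrix with columns $\varphi_1,\dots,\varphi_{\mathcal{C}}$ (entries $\varphi_j(x)$, $x=1,\dots,N$) such that (i) $\sum_{j=1}^{\mathcal{C}}\varphi_j(x)\overline{\varphi_j(y)}=0$ whenever $x\neq y$, (ii) $\sum_{j=1}^{\mathcal{C}}\varphi_j(x)=0$ for all $x$, and (iii) the columns of $\Phi$ form a group under pointwise multiplication. Then the normalized columns $(N^{-1/2}\varphi_j)_{j=1,\dots,\mathcal{C}}$ form a tight frame in $\mathbb{C}^N$ with redundancy $\mathcal{C}/N$; that is, for every $v\in\mathbb{C}^N$, $\sum_{j=1}^{\mathcal{C}}|\langle v,N^{-1/2}\varphi_j\rangle|^2=\frac{\mathcal{C}}{N}\|v\|^2$.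
   Context: "The columns form a group under pointwise multiplication" means: for all $j,j'$ there is $j''$ with $\varphi_j(x)\varphi_{j'}(x)=\varphi_{j''}(x)$ for all $x$, and the set of columns is a group under this operation (its identity being the all-ones column). $\Phi$ is assumed to have no repeated columns. $\|\cdot\|$ is the Euclidean norm and $\langle\cdot,\cdot\rangle$ the standard Hermitian inner product. *)

theory Defs
  imports Complex_Main "HOL-Algebra.Group"
begin

text \<open>Vectors in C^N are functions nat => complex, read on the index set {1..N}.
 The columns of the N x C matrix Phi are phi 1, ..., phi C, with entries phi j x, x in {1..N}.\<close>

definition column :: "nat \<Rightarrow> (nat \<Rightarrow> nat \<Rightarrow> complex) \<Rightarrow> nat \<Rightarrow> (nat \<Rightarrow> complex)" where
  "column N \<phi> j = (\<lambda>x\<in>{1..N}. \<phi> j x)"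

definition columns :: "nat \<Rightarrow> nat \<Rightarrow> (nat \<Rightarrow> nat \<Rightarrow> complex) \<Rightarrow> (nat \<Rightarrow> complex) set" where
  "columns N C \<phi> = column N \<phi> ` {1..C}"

definition column_monoid :: "nat \<Rightarrow> nat \<Rightarrow> (nat \<Rightarrow> nat \<Rightarrow> complex) \<Rightarrow> (nat \<Rightarrow> complex) monoid" where
  "column_monoid N C \<phi> =
     \<lparr> carrier = columns N C \<phi>,
       mult = (\<lambda>f g. \<lambda>x\<in>{1..N}. f x * g x),
       one = (\<lambda>x\<in>{1..N}. 1) \<rparr>"

definition herm_inner :: "nat \<Rightarrow> (nat \<Rightarrow> complex) \<Rightarrow> (nat \<Rightarrow> complex) \<Rightarrow> complex" where
  "herm_inner N v w = (\<Sum>x=1..N. v x * cnj (w x))"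

definition eucl_norm :: "nat \<Rightarrow> (nat \<Rightarrow> complex) \<Rightarrow> real" where
  "eucl_norm N v = sqrt (\<Sum>x=1..N. (cmod (v x))\<^sup>2)"

end

theory Submission
  imports Defs "HOL-Algebra.Multiplicative_Group"
begin

text \<open>Since the columns form a finite group under pointwise multiplication, every entry is a
  root of unity, so each row of \<open>\<Phi>\<close> has squared norm \<open>\<C>\<close>. Together with the orthogonality of
  distinct rows this gives \<open>\<Phi> \<Phi>\<^sup>* = \<C> I\<close>, and then
  \<open>\<Sum>\<^sub>j |\<langle>v, \<phi>\<^sub>j\<rangle>|\<^sup>2 = \<langle>\<Phi> \<Phi>\<^sup>* v, v\<rangle> = \<C> \<parallel>v\<parallel>\<^sup>2\<close>.\<close>

lemma column_monoid_pow_apply: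
  assumes "x \<in> {1..N}"
  shows "(f [^]\<^bsub>column_monoid N C \<phi>\<^esub> n) x = f x ^ n"
  using assms by (induction n) (auto simp: column_monoid_def)

lemma column_monoid_entry_norm_eq_1:
  assumes grp: "group (column_monoid N C \<phi>)"
    and j: "j \<in> {1..C}" and x: "x \<in> {1..N}"
  shows "cmod (\<phi> j x) = 1"
proof -
  let ?G = "column_monoid N C \<phi>"
  interpret G: group ?G by (rule grp)
  have "finite (carrier ?G)" by (simp add: column_monoid_def columns_def)
  then have order_pos: "0 < order ?G" by (simp add: G.order_gt_0_iff_finite)
  have "column N \<phi> j \<in> carrier ?G" using j by (simp add: column_monoid_def columns_def)
  then have "(column N \<phi> j [^]\<^bsub>?G\<^esub> order ?G) x = \<one>\<^bsub>?G\<^esub> x"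
    by (simp add: G.pow_order_eq_1)
  then have "\<phi> j x ^ order ?G = 1"
    using x by (simp add: column_monoid_pow_apply) (simp add: column_monoid_def column_def)
  then have "cmod (\<phi> j x) ^ order ?G = 1 ^ order ?G" by (metis norm_one norm_power power_one)
  then show ?thesis using order_pos by (simp add: power_eq_imp_eq_base)
qed

lemma sum_cmod_inner_sq_eq_if_gram_scalar:
  fixes \<phi> :: "'j \<Rightarrow> 'x \<Rightarrow> complex" and v :: "'x \<Rightarrow> complex"
  assumes "finite J" "finite A"
    and gram: "\<And>x y. x \<in> A \<Longrightarrow> y \<in> A \<Longrightarrow>
                 (\<Sum>j\<in>J. \<phi> j y * cnj (\<phi> j x)) = (if y = x then of_real c else 0)"
  shows "(\<Sum>j\<in>J. (cmod (\<Sum>x\<in>A. v x * cnj (\<phi> j x)))\<^sup>2) = c * (\<Sum>x\<in>A. (cmod (v x))\<^sup>2)"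
proof -
  have "complex_of_real (\<Sum>j\<in>J. (cmod (\<Sum>x\<in>A. v x * cnj (\<phi> j x)))\<^sup>2)
      = (\<Sum>j\<in>J. (\<Sum>x\<in>A. v x * cnj (\<phi> j x)) * cnj (\<Sum>y\<in>A. v y * cnj (\<phi> j y)))"
    by (simp only: of_real_sum complex_norm_square)
  also have "\<dots> = (\<Sum>j\<in>J. \<Sum>x\<in>A. \<Sum>y\<in>A. v x * cnj (v y) * (\<phi> j y * cnj (\<phi> j x)))"
    by (simp add: sum_product cnj_sum mult_ac)
  also have "\<dots> = (\<Sum>x\<in>A. \<Sum>y\<in>A. v x * cnj (v y) * (\<Sum>j\<in>J. \<phi> j y * cnj (\<phi> j x)))"
    by (simp add: sum_distrib_left sum.swap[of _ J] sum.swap[of _ J A])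
  also have "\<dots> = (\<Sum>x\<in>A. \<Sum>y\<in>A. if y = x then of_real c * (v x * cnj (v x)) else 0)"
    by (intro sum.cong refl) (simp add: gram)
  also have "\<dots> = (\<Sum>x\<in>A. of_real c * (v x * cnj (v x)))"
    using \<open>finite A\<close> by simp
  also have "\<dots> = complex_of_real (c * (\<Sum>x\<in>A. (cmod (v x))\<^sup>2))"
    by (simp only: of_real_mult of_real_sum complex_norm_square sum_distrib_left)
  finally show ?thesis by (simp only: of_real_eq_iff)
qed

theorem lemma2p4:
  fixes N C :: nat and \<phi> :: "nat \<Rightarrow> nat \<Rightarrow> complex"
  assumes N_pos: "N \<ge> 1"
    and no_repeat: "inj_on (column N \<phi>) {1..C}"
    and orth: "\<And>x y. x \<in> {1..N} \<Longrightarrow> y \<in> {1..N} \<Longrightarrow> x \<noteq> y \<Longrightarrow>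
                 (\<Sum>j=1..C. \<phi> j x * cnj (\<phi> j y)) = 0"
    and zero_sum: "\<And>x. x \<in> {1..N} \<Longrightarrow> (\<Sum>j=1..C. \<phi> j x) = 0"
    and grp: "group (column_monoid N C \<phi>)"
  shows "\<forall>v :: nat \<Rightarrow> complex.
           (\<Sum>j=1..C. (cmod (herm_inner N v (\<lambda>x. \<phi> j x / complex_of_real (sqrt (real N)))))\<^sup>2)
             = real C / real N * (eucl_norm N v)\<^sup>2"
proof
  fix v :: "nat \<Rightarrow> complex"
  have row_norm: "(\<Sum>j=1..C. \<phi> j x * cnj (\<phi> j x)) = of_nat C" if "x \<in> {1..N}" for x
    using column_monoid_entry_norm_eq_1[OF grp _ that]
    by (simp add: complex_norm_square[symmetric])
  have gram: "(\<Sum>j=1..C. \<phi> j y * cnj (\<phi> j x)) = (if y = x then of_real (real C) else 0)"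
    if "x \<in> {1..N}" "y \<in> {1..N}" for x y
    using that orth row_norm by auto
  have frame: "(\<Sum>j=1..C. (cmod (\<Sum>x=1..N. v x * cnj (\<phi> j x)))\<^sup>2)
      = real C * (\<Sum>x=1..N. (cmod (v x))\<^sup>2)"
    by (rule sum_cmod_inner_sq_eq_if_gram_scalar[OF _ _ gram]) simp_all
  have scale: "herm_inner N v (\<lambda>x. \<phi> j x / complex_of_real (sqrt (real N)))
      = (\<Sum>x=1..N. v x * cnj (\<phi> j x)) / complex_of_real (sqrt (real N))" for j
    by (simp add: herm_inner_def sum_divide_distrib)
  have "(\<Sum>j=1..C. (cmod (herm_inner N v (\<lambda>x. \<phi> j x / complex_of_real (sqrt (real N)))))\<^sup>2)
      = (\<Sum>j=1..C. (cmod (\<Sum>x=1..N. v x * cnj (\<phi> j x)))\<^sup>2) / real N"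
    using N_pos by (simp only: scale) (simp add: norm_divide power_divide flip: sum_divide_distrib)
  also have "\<dots> = real C * (\<Sum>x=1..N. (cmod (v x))\<^sup>2) / real N"
    by (simp only: frame)
  also have "\<dots> = real C / real N * (eucl_norm N v)\<^sup>2"
    by (simp add: eucl_norm_def sum_nonneg)
  finally show "(\<Sum>j=1..C. (cmod (herm_inner N v (\<lambda>x. \<phi> j x / complex_of_real (sqrt (real N)))))\<^sup>2)
      = real C / real N * (eucl_norm N v)\<^sup>2" .
qed

end
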